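(* Consider the nonlinear discrete-time system $x^+=f(x,u)$ with the optimal control problem $\mathscr{P}(x_k)$, its reduced-order version $\widehat{\mathscr{P}}(x_k,\tilde{\mathbf{w}}_k)$ and the active-subspace NMPC scheme (Algorithm 1), all as described in the context below, and let Assumption 1 (A1–A3 below) hold. If for some $k\in\mathbb{N}_0$ the reduced problem $\widehat{\mathscr{P}}(x_k,\tilde{\mathbf{w}}_k)$ is feasible, i.e., there exists $(\mathbf{v}_k,\mu_k)\in\mathbb{R}^q\times\mathbb{R}$ such that $\mathbf{u}_k=T_1\mathbf{v}_k+\mu_kT_2\tilde{\mathbf{w}}_k$ satisfies the constraints of $\widehat{\mathscr{P}}(x_k,\tilde{\mathbf{w}}_k)$, then $\widehat{\mathscr{P}}(x_{k+1},\tilde{\mathbf{w}}_{k+1})$ is also feasible.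
   Context: System: $x^+=f(x,u)$, $x(0)=x_0$, with continuous $f:\mathbb{X}\times\mathbb{U}\to\mathbb{X}$, $\mathbb{X}\subseteq\mathbb{R}^n$, $\mathbb{U}\subseteq\mathbb{R}^m$ closed sets containing the origin in their interior, and $(0,0)$ an equilibrium. Nominal setting: the closed-loop state evolves exactly as the model, $x_{k+1}=f(x_k,u_{k|k})$. Optimal control problem with horizon $N\in\mathbb{N}$: $\mathscr{P}(x_k)$ is to minimize $\sum_{i=0}^{N-1}\ell(x_{k+i|k},u_{k+i|k})+V_f(x_{k+N|k})$ over $\mathbf{u}_k=[u_{k|k}^\top,\dots,u_{k+N-1|k}^\top]^\top$ subject to $x_{k|k}=x_k$, $x_{k+i+1|k}=f(x_{k+i|k},u_{k+i|k})$, $u_{k+i|k}\in\mathbb{U}$, $x_{k+i|k}\in\mathbb{X}$ for $i=0,\dots,N-1$, and $x_{k+N|k}\in\mathbb{X}_f$ (terminal set). Here $\ell$ and $V_f$ are continuous. Eliminating the states, this is written as $\min_{\mathbf{u}_k}J(x_k,\mathbf{u}_k)$ s.t. $g(x_k,\mathbf{u}_k)\le 0$, where $g\le 0$ collects all input, state and terminal constraints. $\hat{\mathbb{X}}_0$ denotes the set of initial states for which $\mathscr{P}$ is feasible, $V(x)$ its optimal value, and $\mathbb{X}_{\mathrm{ini}}\subseteq\hat{\mathbb{X}}_0$ a compact set containing the origin in its interior. Assumption 1: (A1) there is $\alpha\in\mathcal{K}_\infty$ with $\ell(x,u)\ge\alpha(\|x\|)$ for all $(x,u)\in\mathbb{X}\times\mathbb{U}$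 and $\ell(0,0)=0$; (A2) there is a feedback $\kappa:\mathbb{X}_f\to\mathbb{U}$ such that for all $x\in\mathbb{X}_f$, $f(x,\kappa(x))\in\mathbb{X}_f$, $V_f(0)=0$ and $V_f(f(x,\kappa(x)))-V_f(x)\le-\ell(x,\kappa(x))$; (A3) there is $\beta\in\mathcal{K}_\infty$ with $V(x)\le\beta(\|x\|)$ for all $x\in\mathbb{X}_{\mathrm{ini}}$. Subspaces: $T=[T_1\ T_2]\in\mathbb{R}^{Nm\times Nm}$ is an arbitrary orthonormal matrix, $T_1\in\mathbb{R}^{Nm\times q}$ (active subspace), $T_2\in\mathbb{R}^{Nm\times(Nm-q)}$ (inactive subspace). Reduced problem: $\widehat{\mathscr{P}}(x_k,\tilde{\mathbf{w}}_k)$ is to minimize $J(x_k,T_1\mathbf{v}_k+\mu_kT_2\tilde{\mathbf{w}}_k)$ over $(\mathbf{v}_k,\mu_k)\in\mathbb{R}^q\times\mathbb{R}$ subject to $g(x_k,T_1\mathbf{v}_k+\mu_kT_2\tilde{\mathbf{w}}_k)\le 0$, where $\tilde{\mathbf{w}}_k$ is a given parameter. Algorithm 1 (active-subspace NMPC): at $k=0$ solve $\mathscr{P}(x_0)$ for a feasible $\tilde{\mathbf{u}}_0$ and set $\tilde{\mathbf{w}}_0=T_2^\top\tilde{\mathbf{u}}_0$. At each $k$: solve $\widehat{\mathscr{P}}(x_k,\tilde{\mathbf{w}}_k)$ for $(\mathbf{v}_k^\star,\mu_k^\star)$; if $J(x_k,T_1\mathbf{v}_k^\star+\mu_k^\star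 T_2\tilde{\mathbf{w}}_k)\le J(x_k,\tilde{\mathbf{u}}_k)$ set $\mathbf{u}_k=T_1\mathbf{v}_k^\star+\mu_k^\star T_2\tilde{\mathbf{w}}_k$, else $\mathbf{u}_k=\tilde{\mathbf{u}}_k$; apply the first element $u_{k|k}$ of $\mathbf{u}_k$; form the next guess by shifting, $\tilde{\mathbf{u}}_{k+1}=[u_{k+1|k}^\top,\dots,u_{k+N-1|k}^\top,\kappa(x_{k+N|k})^\top]^\top$ (with $x_{k+i|k}$ the states predicted from $x_k$ under $\mathbf{u}_k$), and set $\tilde{\mathbf{w}}_{k+1}=T_2^\top\tilde{\mathbf{u}}_{k+1}$. *)

theory Defs
  imports "HOL-Analysis.Analysis"
begin

definition Kinf :: "(real \<Rightarrow> real) \<Rightarrow> bool" where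
  "Kinf a \<longleftrightarrow> continuous_on {0..} a \<and> a 0 = 0 \<and> strict_mono_on {0..} a
     \<and> filterlim a at_top at_top"

text \<open>An input sequence (stacked input vector in R^(N m)) is represented as a function
  nat => input, of which only the entries with index i < N are relevant.\<close>
type_synonym ('u) plan = "nat \<Rightarrow> 'u"

primrec traj :: "('x \<Rightarrow> 'u \<Rightarrow> 'x) \<Rightarrow> 'x \<Rightarrow> (nat \<Rightarrow> 'u) \<Rightarrow> nat \<Rightarrow> 'x" where
  "traj f x u 0 = x"
| "traj f x u (Suc i) = f (traj f x u i) (u i)"

definition ocp_feasible ::
  "('x \<Rightarrow> 'u \<Rightarrow> 'x) \<Rightarrow> 'x set \<Rightarrow> 'u set \<Rightarrow> 'x set \<Rightarrow> nat \<Rightarrow> 'x \<Rightarrow> (nat \<Rightarrow> 'u) \<Rightarrow> bool" where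
  "ocp_feasible f X U Xf N x u \<longleftrightarrow>
     (\<forall>i<N. u i \<in> U \<and> traj f x u i \<in> X) \<and> traj f x u N \<in> Xf"

definition Jcost ::
  "('x \<Rightarrow> 'u \<Rightarrow> 'x) \<Rightarrow> ('x \<Rightarrow> 'u \<Rightarrow> real) \<Rightarrow> ('x \<Rightarrow> real) \<Rightarrow> nat \<Rightarrow> 'x \<Rightarrow> (nat \<Rightarrow> 'u) \<Rightarrow> real" where
  "Jcost f l Vf N x u = (\<Sum>i<N. l (traj f x u i) (u i)) + Vf (traj f x u N)"

definition feas_set ::
  "('x \<Rightarrow> 'u \<Rightarrow> 'x) \<Rightarrow> 'x set \<Rightarrow> 'u set \<Rightarrow> 'x set \<Rightarrow> nat \<Rightarrow> 'x set" where
  "feas_set f X U Xf N = {x. \<exists>u. ocp_feasible f X U Xf N x u}"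

definition Vopt ::
  "('x \<Rightarrow> 'u \<Rightarrow> 'x) \<Rightarrow> ('x \<Rightarrow> 'u \<Rightarrow> real) \<Rightarrow> ('x \<Rightarrow> real) \<Rightarrow> 'x set \<Rightarrow> 'u set \<Rightarrow> 'x set
     \<Rightarrow> nat \<Rightarrow> 'x \<Rightarrow> real" where
  "Vopt f l Vf X U Xf N x = Inf (Jcost f l Vf N x ` {u. ocp_feasible f X U Xf N x u})"

definition pinner :: "nat \<Rightarrow> (nat \<Rightarrow> 'u::real_inner) \<Rightarrow> (nat \<Rightarrow> 'u) \<Rightarrow> real" where
  "pinner N u w = (\<Sum>i<N. inner (u i) (w i))"

text \<open>The matrix T = [T1 T2] in R^(Nm x Nm) is given by its columns Tcol j (j < Nm),
  each a stacked input vector; T1 consists of the first q columns, T2 of the remaining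
  Nm - q columns.  Vectors in R^q and R^(Nm-q) are functions nat => real of which only
  the first q resp. Nm-q entries are relevant.\<close>
definition orthonormal_T :: "nat \<Rightarrow> nat \<Rightarrow> (nat \<Rightarrow> nat \<Rightarrow> 'u::real_inner) \<Rightarrow> bool" where
  "orthonormal_T N d Tcol \<longleftrightarrow>
     (\<forall>j<d. \<forall>j'<d. pinner N (Tcol j) (Tcol j') = (if j = j' then 1 else 0))"

definition T1mul :: "nat \<Rightarrow> (nat \<Rightarrow> nat \<Rightarrow> 'u::real_vector) \<Rightarrow> (nat \<Rightarrow> real) \<Rightarrow> nat \<Rightarrow> 'u" where
  "T1mul q Tcol v = (\<lambda>i. \<Sum>j<q. v j *\<^sub>R Tcol j i)"

definition T2mul :: "nat \<Rightarrow> nat \<Rightarrow> (nat \<Rightarrow> nat \<Rightarrow> 'u::real_vector) \<Rightarrow> (nat \<Rightarrow> real) \<Rightarrow> nat \<Rightarrow> 'u" where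
  "T2mul d q Tcol w = (\<lambda>i. \<Sum>j<d - q. w j *\<^sub>R Tcol (q + j) i)"

definition T2tmul :: "nat \<Rightarrow> nat \<Rightarrow> (nat \<Rightarrow> nat \<Rightarrow> 'u::real_inner) \<Rightarrow> (nat \<Rightarrow> 'u) \<Rightarrow> nat \<Rightarrow> real" where
  "T2tmul N q Tcol u = (\<lambda>j. pinner N (Tcol (q + j)) u)"

definition red_input ::
  "nat \<Rightarrow> nat \<Rightarrow> (nat \<Rightarrow> nat \<Rightarrow> 'u::real_vector) \<Rightarrow> (nat \<Rightarrow> real) \<Rightarrow> real \<Rightarrow> (nat \<Rightarrow> real) \<Rightarrow> nat \<Rightarrow> 'u" where
  "red_input d q Tcol v \<mu> w = (\<lambda>i. T1mul q Tcol v i + \<mu> *\<^sub>R T2mul d q Tcol w i)"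

definition red_feasible ::
  "('x \<Rightarrow> 'u::real_vector \<Rightarrow> 'x) \<Rightarrow> 'x set \<Rightarrow> 'u set \<Rightarrow> 'x set \<Rightarrow> nat \<Rightarrow> nat \<Rightarrow> nat
     \<Rightarrow> (nat \<Rightarrow> nat \<Rightarrow> 'u) \<Rightarrow> 'x \<Rightarrow> (nat \<Rightarrow> real) \<Rightarrow> bool" where
  "red_feasible f X U Xf N d q Tcol x w \<longleftrightarrow>
     (\<exists>v \<mu>. ocp_feasible f X U Xf N x (red_input d q Tcol v \<mu> w))"

definition red_optimal ::
  "('x \<Rightarrow> 'u::real_vector \<Rightarrow> 'x) \<Rightarrow> ('x \<Rightarrow> 'u \<Rightarrow> real) \<Rightarrow> ('x \<Rightarrow> real) \<Rightarrow> 'x set \<Rightarrow> 'u set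
     \<Rightarrow> 'x set \<Rightarrow> nat \<Rightarrow> nat \<Rightarrow> nat \<Rightarrow> (nat \<Rightarrow> nat \<Rightarrow> 'u) \<Rightarrow> 'x \<Rightarrow> (nat \<Rightarrow> real)
     \<Rightarrow> (nat \<Rightarrow> real) \<Rightarrow> real \<Rightarrow> bool" where
  "red_optimal f l Vf X U Xf N d q Tcol x w v \<mu> \<longleftrightarrow>
     ocp_feasible f X U Xf N x (red_input d q Tcol v \<mu> w) \<and>
     (\<forall>v' \<mu>'. ocp_feasible f X U Xf N x (red_input d q Tcol v' \<mu>' w) \<longrightarrow>
        Jcost f l Vf N x (red_input d q Tcol v \<mu> w) \<le> Jcost f l Vf N x (red_input d q Tcol v' \<mu>' w))"

text \<open>A run of Algorithm 1 (active-subspace NMPC), with d = N m: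
  xs k = x_k, ut k = tilde u_k, uu k = u_k (applied plan), (vs k, mus k) = solution of
  hat P(x_k, tilde w_k), where tilde w_k = T2^T tilde u_k.\<close>
definition as_nmpc_run ::
  "('x \<Rightarrow> 'u::real_inner \<Rightarrow> 'x) \<Rightarrow> ('x \<Rightarrow> 'u \<Rightarrow> real) \<Rightarrow> ('x \<Rightarrow> real) \<Rightarrow> 'x set \<Rightarrow> 'u set
     \<Rightarrow> 'x set \<Rightarrow> ('x \<Rightarrow> 'u) \<Rightarrow> nat \<Rightarrow> nat \<Rightarrow> nat \<Rightarrow> (nat \<Rightarrow> nat \<Rightarrow> 'u) \<Rightarrow> 'x
     \<Rightarrow> (nat \<Rightarrow> 'x) \<Rightarrow> (nat \<Rightarrow> nat \<Rightarrow> 'u) \<Rightarrow> (nat \<Rightarrow> nat \<Rightarrow> 'u) \<Rightarrow> (nat \<Rightarrow> nat \<Rightarrow> real)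
     \<Rightarrow> (nat \<Rightarrow> real) \<Rightarrow> bool" where
  "as_nmpc_run f l Vf X U Xf \<kappa> N d q Tcol x0 xs uu ut vs mus \<longleftrightarrow>
     xs 0 = x0 \<and>
     ocp_feasible f X U Xf N x0 (ut 0) \<and>
     (\<forall>k. let w = T2tmul N q Tcol (ut k);
              ured = red_input d q Tcol (vs k) (mus k) w
          in (red_feasible f X U Xf N d q Tcol (xs k) w \<longrightarrow>
                red_optimal f l Vf X U Xf N d q Tcol (xs k) w (vs k) (mus k)) \<and>
             uu k = (if red_feasible f X U Xf N d q Tcol (xs k) w \<and>
                         Jcost f l Vf N (xs k) ured \<le> Jcost f l Vf N (xs k) (ut k)
                     then ured else ut k) \<and>
             xs (Suc k) = f (xs k) (uu k 0) \<and>
             ut (Suc k) = (\<lambda>i. if i < N - 1 then uu k (Suc i)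
                               else \<kappa> (traj f (xs k) (uu k) N)))"

end

theory Submission
  imports Defs "HOL-Library.Function_Algebras"
begin

(* The warm start tilde u_(k+1) of Algorithm 1 is the applied plan shifted by one step and
   completed by the terminal feedback kappa, so by (A2) it is again feasible for P(x_(k+1)).
   Since the applied plan is either the previous warm start or a solution of the reduced
   problem, induction along the run shows that every warm start is feasible.  As T is
   orthonormal and square, T1 T1^T + T2 T2^T = I, so tilde u_(k+1) = T1 v + 1 * T2 tilde w_(k+1)
   with v = T1^T tilde u_(k+1): the reduced problem at time k+1 is feasible with mu = 1.  Squareness enters as a dimension count:
   N * m orthonormal columns span all input sequences of length N. *)

lemma sum_fun_apply: "sum f A x = (\<Sum>a\<in>A. f a x)"
  by (induction A rule: infinite_finite_induct) auto

(* Functions carry no real_vector instance, so their pointwise vector space is interpreted. *)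
global_interpretation plan: vector_space "\<lambda>c (u :: nat \<Rightarrow> 'a::real_vector) i. c *\<^sub>R u i"
  by unfold_locales (auto simp: fun_eq_iff scaleR_add_right scaleR_add_left)

lemma pinner_sum_left: "pinner N (sum g A) w = (\<Sum>a\<in>A. pinner N (g a) w)"
  unfolding pinner_def sum_fun_apply by (simp add: inner_sum_left) (rule sum.swap)

lemma pinner_scaleR_left: "pinner N (\<lambda>i. c *\<^sub>R u i) w = c * pinner N u w"
  unfolding pinner_def by (simp add: sum_distrib_left)

lemma pinner_commute: "pinner N u w = pinner N w u"
  unfolding pinner_def by (simp add: inner_commute)

lemma pinner_cong_left: "(\<And>i. i < N \<Longrightarrow> u i = u' i) \<Longrightarrow> pinner N u w = pinner N u' w"
  unfolding pinner_def by simp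

lemma plan_span_unit_plans:
  fixes u :: "nat \<Rightarrow> 'a::euclidean_space"
  assumes u: "\<forall>i\<ge>N. u i = 0"
  shows "u \<in> plan.span ((\<lambda>(a, b) i. if i = a then b else 0) ` ({..<N} \<times> Basis))"
proof -
  have "(\<Sum>(a, b)\<in>{..<N} \<times> Basis. (u a \<bullet> b) *\<^sub>R (if i = a then b else 0)) = u i" for i
  proof (cases "i < N")
    case True
    have "(\<Sum>(a, b)\<in>{..<N} \<times> Basis. (u a \<bullet> b) *\<^sub>R (if i = a then b else 0))
        = (\<Sum>a<N. if i = a then (\<Sum>b\<in>Basis. (u a \<bullet> b) *\<^sub>R b) else 0)"
      unfolding sum.cartesian_product[symmetric] by (intro sum.cong) auto
    also have "\<dots> = u i"
      using True by (simp add: euclidean_representation)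
    finally show ?thesis .
  next
    case False
    then show ?thesis using u by (auto intro: sum.neutral)
  qed
  then have "u = (\<Sum>(a, b)\<in>{..<N} \<times> Basis. (\<lambda>i. (u a \<bullet> b) *\<^sub>R (if i = a then b else 0)))"
    by (simp add: fun_eq_iff sum_fun_apply case_prod_beta)
  also have "\<dots> \<in> plan.span ((\<lambda>(a, b) i. if i = a then b else 0) ` ({..<N} \<times> Basis))"
    unfolding case_prod_beta by (intro plan.span_sum plan.span_scale plan.span_base) auto
  finally show ?thesis .
qed

lemma plan_independent_card_le:
  fixes S :: "(nat \<Rightarrow> 'a::euclidean_space) set"
  assumes "plan.independent S" and "\<forall>u\<in>S. \<forall>i\<ge>N. u i = 0"
  shows "finite S \<and> card S \<le> N * DIM('a)"
proof -
  define E :: "(nat \<Rightarrow> 'a) set"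
    where "E = (\<lambda>(a, b) i. if i = a then b else 0) ` ({..<N} \<times> Basis)"
  have "card E \<le> N * DIM('a)"
    unfolding E_def using card_image_le[of "{..<N} \<times> (Basis::'a set)"]
    by (simp add: card_cartesian_product)
  moreover have "S \<subseteq> plan.span E"
    using assms(2) plan_span_unit_plans unfolding E_def by blast
  then have "finite S \<and> card S \<le> card E"
    using assms(1) by (intro plan.independent_span_bound) (auto simp: E_def)
  ultimately show ?thesis by auto
qed

lemma plan_span_of_independent_card_eq:
  fixes B :: "(nat \<Rightarrow> 'a::euclidean_space) set"
  assumes indep: "plan.independent B" and B: "\<forall>v\<in>B. \<forall>i\<ge>N. v i = 0"
    and card: "card B = N * DIM('a)" and u: "\<forall>i\<ge>N. u i = 0"
  shows "u \<in> plan.span B"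
proof (rule ccontr)
  assume u_notin: "u \<notin> plan.span B"
  then have "plan.independent (insert u B)"
    using plan.independent_insertI indep by blast
  then have "finite (insert u B) \<and> card (insert u B) \<le> N * DIM('a)"
    using B u by (intro plan_independent_card_le) auto
  moreover have "u \<notin> B"
    using u_notin plan.span_base by blast
  ultimately show False
    using card by (auto simp: card_insert_disjoint)
qed

lemma orthonormal_T_expansion:
  fixes Tcol :: "nat \<Rightarrow> nat \<Rightarrow> 'a::euclidean_space"
  assumes orth: "orthonormal_T N (N * DIM('a)) Tcol" and i: "i < N"
  shows "u i = (\<Sum>j<N * DIM('a). pinner N (Tcol j) u *\<^sub>R Tcol j i)"
proof -
  define d where "d = N * DIM('a)"
  \<comment> \<open>Entries beyond the horizon are invisible to \<open>pinner N\<close>; truncating them makes the columns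
    independent vectors of an \<open>N * DIM('a)\<close>-dimensional space.\<close>
  define trunc :: "(nat \<Rightarrow> 'a) \<Rightarrow> nat \<Rightarrow> 'a" where "trunc g i = (if i < N then g i else 0)" for g i
  define B where "B = (\<lambda>j. trunc (Tcol j)) ` {..<d}"
  have pinner_trunc: "pinner N (trunc g) w = pinner N g w" for g w
    by (rule pinner_cong_left) (simp add: trunc_def)
  have orth': "pinner N (Tcol j) (Tcol j') = (if j = j' then 1 else 0)" if "j < d" "j' < d" for j j'
    using orth that unfolding orthonormal_T_def d_def by blast
  have inj: "inj_on (\<lambda>j. trunc (Tcol j)) {..<d}"
  proof (rule inj_onI)
    fix j j' assume j: "j \<in> {..<d}" "j' \<in> {..<d}" and "trunc (Tcol j) = trunc (Tcol j')"
    then have "pinner N (Tcol j) (Tcol j') = pinner N (Tcol j') (Tcol j')"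
      by (metis pinner_trunc)
    then show "j = j'" using orth'[of j j'] orth'[of j' j'] j by (auto split: if_splits)
  qed
  have sum_B: "(\<Sum>v\<in>B. g v) = (\<Sum>j<d. g (trunc (Tcol j)))" for g :: "_ \<Rightarrow> nat \<Rightarrow> 'a"
    unfolding B_def by (rule sum.reindex_cong[OF inj refl refl])
  have coeff: "pinner N (\<Sum>v\<in>B. (\<lambda>i. c v *\<^sub>R v i)) (Tcol j0) = c (trunc (Tcol j0))"
    if "j0 < d" for c j0
  proof -
    have "pinner N (\<Sum>v\<in>B. (\<lambda>i. c v *\<^sub>R v i)) (Tcol j0)
        = (\<Sum>j<d. c (trunc (Tcol j)) * pinner N (Tcol j) (Tcol j0))"
      by (simp add: sum_B pinner_sum_left pinner_scaleR_left pinner_trunc)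
    also have "\<dots> = (\<Sum>j<d. if j = j0 then c (trunc (Tcol j)) else 0)"
      by (intro sum.cong) (auto simp: orth' that)
    also have "\<dots> = c (trunc (Tcol j0))"
      using that by simp
    finally show ?thesis .
  qed
  have "plan.independent B"
  proof
    assume "plan.dependent B"
    then obtain c where c: "\<exists>v\<in>B. c v \<noteq> 0" "(\<Sum>v\<in>B. (\<lambda>i. c v *\<^sub>R v i)) = 0"
      using plan.dependent_finite[of B] by (auto simp: B_def)
    then obtain j0 where "j0 < d" "c (trunc (Tcol j0)) \<noteq> 0" unfolding B_def by auto
    with coeff[of j0 c] c(2) show False by (simp add: pinner_def)
  qed
  then have "trunc u \<in> plan.span B"
    using card_image[OF inj]
    by (intro plan_span_of_independent_card_eq) (auto simp: B_def trunc_def d_def)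
  then obtain c where c: "trunc u = (\<Sum>v\<in>B. (\<lambda>i. c v *\<^sub>R v i))"
    using plan.span_finite[of B] by (auto simp: B_def)
  have "c (trunc (Tcol j)) = pinner N (Tcol j) u" if "j < d" for j
    by (metis coeff[OF that] c pinner_trunc pinner_commute)
  then have "trunc u i = (\<Sum>j<d. pinner N (Tcol j) u *\<^sub>R trunc (Tcol j) i)"
    by (simp add: c sum_B sum_fun_apply)
  then show ?thesis
    using i by (simp add: trunc_def d_def)
qed

lemma traj_cong: "(\<And>j. j < N \<Longrightarrow> u j = u' j) \<Longrightarrow> i \<le> N \<Longrightarrow> traj f x u i = traj f x u' i"
  by (induction i) auto

lemma ocp_feasible_cong:
  "(\<And>j. j < N \<Longrightarrow> u j = u' j) \<Longrightarrow> ocp_feasible f X U Xf N x u = ocp_feasible f X U Xf N x u'"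
  unfolding ocp_feasible_def using traj_cong[of N u u' _ f x] by auto

lemma traj_shift:
  "i < N \<Longrightarrow> traj f (f x (u 0)) (\<lambda>i. if i < N - 1 then u (Suc i) else w) i = traj f x u (Suc i)"
  by (induction i) auto

lemma ocp_feasible_shift:
  assumes feas: "ocp_feasible f X U Xf N x u" and N: "N \<ge> 1" and Xf: "Xf \<subseteq> X"
    and invariant: "\<forall>x\<in>Xf. \<kappa> x \<in> U \<and> f x (\<kappa> x) \<in> Xf"
  shows "ocp_feasible f X U Xf N (f x (u 0))
           (\<lambda>i. if i < N - 1 then u (Suc i) else \<kappa> (traj f x u N))"
    (is "ocp_feasible _ _ _ _ _ ?x' ?u'")
proof -
  have U: "\<And>i. i < N \<Longrightarrow> u i \<in> U" and X: "\<And>i. i < N \<Longrightarrow> traj f x u i \<in> X"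
    and terminal: "traj f x u N \<in> Xf"
    using feas unfolding ocp_feasible_def by auto
  have traj': "traj f ?x' ?u' i = traj f x u (Suc i)" if "i < N" for i
    using that by (rule traj_shift)
  have "?u' i \<in> U \<and> traj f ?x' ?u' i \<in> X" if i: "i < N" for i
  proof
    show "?u' i \<in> U"
      using U[of "Suc i"] invariant terminal by auto
    have "traj f x u (Suc i) \<in> X"
      using X[of "Suc i"] terminal Xf i by (metis Suc_lessI subsetD)
    then show "traj f ?x' ?u' i \<in> X"
      using traj'[OF i] by simp
  qed
  moreover have "traj f ?x' ?u' N = f (traj f x u N) (\<kappa> (traj f x u N))"
    using traj'[of "N - 1"] N by (cases N) auto
  then have "traj f ?x' ?u' N \<in> Xf"
    using invariant terminal by simp
  ultimately show ?thesis
    unfolding ocp_feasible_def by blast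
qed

lemma as_nmpc_run_guess_feasible:
  assumes run: "as_nmpc_run f l Vf X U Xf \<kappa> N d q Tcol x0 xs uu ut vs mus"
    and "N \<ge> 1" and "Xf \<subseteq> X" and "\<forall>x\<in>Xf. \<kappa> x \<in> U \<and> f x (\<kappa> x) \<in> Xf"
  shows "ocp_feasible f X U Xf N (xs k) (ut k)"
proof (induction k)
  case 0
  then show ?case
    using run unfolding as_nmpc_run_def by simp
next
  case (Suc k)
  have "ocp_feasible f X U Xf N (xs k) (uu k)"
    using run Suc unfolding as_nmpc_run_def red_optimal_def Let_def by (auto split: if_splits)
  then have "ocp_feasible f X U Xf N (f (xs k) (uu k 0))
               (\<lambda>i. if i < N - 1 then uu k (Suc i) else \<kappa> (traj f (xs k) (uu k) N))"
    using assms(2-) by (rule ocp_feasible_shift)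
  then show ?case
    using run unfolding as_nmpc_run_def Let_def by simp
qed

lemma sum_lessThan_split_shift:
  fixes g :: "nat \<Rightarrow> 'a::comm_monoid_add"
  assumes "q \<le> d"
  shows "(\<Sum>j<d. g j) = (\<Sum>j<q. g j) + (\<Sum>j<d - q. g (q + j))"
proof -
  have "(\<Sum>j<d. g j) = (\<Sum>j<q. g j) + (\<Sum>j=q..<d. g j)"
    using assms by (metis atLeast0LessThan sum.atLeastLessThan_concat zero_le)
  also have "(\<Sum>j=q..<d. g j) = (\<Sum>j<d - q. g (q + j))"
    using sum.shift_bounds_nat_ivl[of g 0 q "d - q"] assms
    by (simp add: atLeast0LessThan add.commute)
  finally show ?thesis .
qed

lemma red_input_expansion:
  fixes Tcol :: "nat \<Rightarrow> nat \<Rightarrow> 'a::euclidean_space"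
  assumes orth: "orthonormal_T N (N * DIM('a)) Tcol" and q: "q \<le> N * DIM('a)" and i: "i < N"
  shows "red_input (N * DIM('a)) q Tcol (\<lambda>j. pinner N (Tcol j) u) 1 (T2tmul N q Tcol u) i = u i"
  using orthonormal_T_expansion[OF orth i, of u]
  by (simp add: red_input_def T1mul_def T2mul_def T2tmul_def sum_lessThan_split_shift[OF q])

lemma red_feasible_of_ocp_feasible:
  fixes Tcol :: "nat \<Rightarrow> nat \<Rightarrow> 'a::euclidean_space"
  assumes "orthonormal_T N (N * DIM('a)) Tcol" and "q \<le> N * DIM('a)"
    and feas: "ocp_feasible f X U Xf N x u"
  shows "red_feasible f X U Xf N (N * DIM('a)) q Tcol x (T2tmul N q Tcol u)"
proof -
  have "ocp_feasible f X U Xf N x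
          (red_input (N * DIM('a)) q Tcol (\<lambda>j. pinner N (Tcol j) u) 1 (T2tmul N q Tcol u))"
    using feas ocp_feasible_cong red_input_expansion[OF assms(1,2)] by metis
  then show ?thesis
    unfolding red_feasible_def by blast
qed

theorem proposition1:
  fixes f :: "real^'n \<Rightarrow> real^'m \<Rightarrow> real^'n"
    and l :: "real^'n \<Rightarrow> real^'m \<Rightarrow> real"
    and Vf :: "real^'n \<Rightarrow> real"
    and X Xf Xini :: "(real^'n) set" and U :: "(real^'m) set"
    and \<kappa> :: "real^'n \<Rightarrow> real^'m"
    and N q :: nat
    and Tcol :: "nat \<Rightarrow> nat \<Rightarrow> real^'m"
    and x0 :: "real^'n"
    and xs :: "nat \<Rightarrow> real^'n" and uu ut :: "nat \<Rightarrow> nat \<Rightarrow> real^'m"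
    and vs :: "nat \<Rightarrow> nat \<Rightarrow> real" and mus :: "nat \<Rightarrow> real"
    and k :: nat
  assumes N_pos: "N \<ge> 1"
    and X_closed: "closed X" and X_0: "0 \<in> interior X"
    and U_closed: "closed U" and U_0: "0 \<in> interior U"
    and f_maps: "\<forall>x\<in>X. \<forall>u\<in>U. f x u \<in> X"
    and f_cont: "continuous_on (X \<times> U) (\<lambda>(x, u). f x u)"
    and f_eq: "f 0 0 = 0"
    and l_cont: "continuous_on (X \<times> U) (\<lambda>(x, u). l x u)"
    and Vf_cont: "continuous_on X Vf"
    and Xf_sub: "Xf \<subseteq> X"
    and Xini_compact: "compact Xini" and Xini_0: "0 \<in> interior Xini"
    and Xini_sub: "Xini \<subseteq> feas_set f X U Xf N"
    and A1: "\<exists>\<alpha>. Kinf \<alpha> \<and> (\<forall>x\<in>X. \<forall>u\<in>U. l x u \<ge> \<alpha> (norm x)) \<and> l 0 0 = 0"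
    and A2: "\<forall>x\<in>Xf. \<kappa> x \<in> U \<and> f x (\<kappa> x) \<in> Xf \<and>
               Vf (f x (\<kappa> x)) - Vf x \<le> - l x (\<kappa> x)"
    and A2_0: "Vf 0 = 0"
    and A3: "\<exists>\<beta>. Kinf \<beta> \<and> (\<forall>x\<in>Xini. Vopt f l Vf X U Xf N x \<le> \<beta> (norm x))"
    and q_le: "q \<le> N * CARD('m)"
    and T_orth: "orthonormal_T N (N * CARD('m)) Tcol"
    and run: "as_nmpc_run f l Vf X U Xf \<kappa> N (N * CARD('m)) q Tcol x0 xs uu ut vs mus"
    and feas_k: "red_feasible f X U Xf N (N * CARD('m)) q Tcol (xs k) (T2tmul N q Tcol (ut k))"
  shows "red_feasible f X U Xf N (N * CARD('m)) q Tcol (xs (Suc k)) (T2tmul N q Tcol (ut (Suc k)))"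
proof -
  have "ocp_feasible f X U Xf N (xs (Suc k)) (ut (Suc k))"
    using run N_pos Xf_sub A2 by (blast intro: as_nmpc_run_guess_feasible)
  moreover have "N * CARD('m) = N * DIM(real^'m)"
    by simp
  ultimately show ?thesis
    using T_orth q_le by (metis red_feasible_of_ocp_feasible)
qed

end
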